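(* Let $G_m$ be a chain hexagonal cactus of length $m\ge 2$ with hexagons $h_1,\dots,h_m$ ordered along the chain (consecutive hexagons share a cut-vertex, $h_1$ and $h_m$ terminal). Let $c$ be the cut-vertex shared by $h_{m-1}$ and $h_m$, and label the vertices of $h_{m-1}$ as $a,b,c,i,j,k$ so that its edges are $ab,bc,ci,ij,jk,ka$. Let $H_{m-1}$ be the subgraph of $G_m$ induced by the vertices of $h_1,\dots,h_{m-1}$. Then at least one of the following holds: (i) $2\,\Psi(H_{m-1}-\{b,c\})\ge \Psi(H_{m-1}-c)$; (ii) $2\,\Psi(H_{m-1}-\{c,i\})\ge \Psi(H_{m-1}-c)$.
   Context: A matching of a graph is a set of pairwise vertex-disjoint edges; it is maximal if it is not a proper subset of another matching. $\Psi(G)$ is the number of maximal matchings of $G$. For a vertex set $S$, $G-S$ (or $G-v$ when $S=\{v\}$) is the graph obtained by deleting the vertices of $S$ and all incident edges. A chain hexagonal cactus is a connected graph all of whose blocks are 6-cycles (hexagons), in which each hexagon has at most two cut-vertices and each cut-vertex lies in exactly two hexagons; its length is its number of hexagons; terminal hexagons are those with exactly one cut-vertex. *)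

theory Defs
  imports Main
begin

type_synonym 'a graph = "'a set \<times> 'a set set"

definition verts :: "'a graph \<Rightarrow> 'a set" where "verts G = fst G"
definition edges :: "'a graph \<Rightarrow> 'a set set" where "edges G = snd G"

definition matching :: "'a graph \<Rightarrow> 'a set set \<Rightarrow> bool" where
  "matching G M \<longleftrightarrow> M \<subseteq> edges G \<and> (\<forall>e\<in>M. \<forall>f\<in>M. e \<noteq> f \<longrightarrow> e \<inter> f = {})"

definition maximal_matching :: "'a graph \<Rightarrow> 'a set set \<Rightarrow> bool" where
  "maximal_matching G M \<longleftrightarrow> matching G M \<and> \<not> (\<exists>M'. matching G M' \<and> M \<subset> M')"

definition Psi :: "'a graph \<Rightarrow> nat" where
  "Psi G = card {M. maximal_matching G M}"

definition del_verts :: "'a graph \<Rightarrow> 'a set \<Rightarrow> 'a graph" where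
  "del_verts G S = (verts G - S, {e \<in> edges G. e \<inter> S = {}})"

definition induced :: "'a graph \<Rightarrow> 'a set \<Rightarrow> 'a graph" where
  "induced G W = (verts G \<inter> W, {e \<in> edges G. e \<subseteq> W})"

definition hex_edges :: "'a list \<Rightarrow> 'a set set" where
  "hex_edges h = {{h ! t, h ! ((t + 1) mod 6)} | t. t < 6}"

text \<open>G is a chain hexagonal cactus whose hexagons, in order along the chain, are
  hs!0, ..., hs!(length hs - 1): every block is one of these hexagons, consecutive
  hexagons share exactly one (cut-)vertex, non-consecutive hexagons are disjoint
  (hence each hexagon has at most two cut-vertices, each cut-vertex lies in exactly
  two hexagons, and hs!0, hs!(m-1) are the terminal hexagons).\<close>
definition chain_hex_cactus :: "'a graph \<Rightarrow> 'a list list \<Rightarrow> bool" where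
  "chain_hex_cactus G hs \<longleftrightarrow>
     hs \<noteq> [] \<and>
     (\<forall>h\<in>set hs. length h = 6 \<and> distinct h) \<and>
     verts G = (\<Union>h\<in>set hs. set h) \<and>
     edges G = (\<Union>h\<in>set hs. hex_edges h) \<and>
     (\<forall>p q. p < q \<and> q < length hs \<longrightarrow>
        card (set (hs ! p) \<inter> set (hs ! q)) = (if q = p + 1 then 1 else 0))"

end

theory Submission
  imports Defs
begin

text \<open>For a pendant vertex \<open>v\<close> with neighbour \<open>u\<close>, a maximal matching either contains
  \<open>uv\<close>, and the rest is a maximal matching of \<open>G - {u, v}\<close>, or it is a maximal matching of
  \<open>G - v\<close>; as deleting a vertex never increases \<open>\<Psi>\<close>, this gives \<open>\<Psi>(G) \<le> 2 \<Psi>(G - v)\<close>.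
  In \<open>H - c\<close> the vertex \<open>b\<close> (resp. \<open>i\<close>) is pendant unless it is the cut-vertex joining
  \<open>h\<^sub>m\<^sub>-\<^sub>1\<close> to \<open>h\<^sub>m\<^sub>-\<^sub>2\<close>, and consecutive hexagons share only one vertex.\<close>

lemma matching_iff: "matching G M \<longleftrightarrow> M \<subseteq> edges G \<and> pairwise disjnt M"
  by (auto simp: matching_def pairwise_def disjnt_def)

lemma maximal_matching_iff:
  "maximal_matching G M \<longleftrightarrow>
     matching G M \<and> (\<forall>e\<in>edges G. e \<notin> M \<longrightarrow> (\<exists>f\<in>M. \<not> disjnt e f))"
proof
  assume max: "maximal_matching G M"
  then have "matching G M" by (simp add: maximal_matching_def)
  moreover have "\<exists>f\<in>M. \<not> disjnt e f" if "e \<in> edges G" "e \<notin> M" for e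
  proof (rule ccontr)
    assume "\<not> ?thesis"
    with that \<open>matching G M\<close> have "matching G (insert e M)"
      by (auto simp: matching_iff pairwise_insert disjnt_sym)
    with \<open>e \<notin> M\<close> max show False
      unfolding maximal_matching_def by blast
  qed
  ultimately show "matching G M \<and> (\<forall>e\<in>edges G. e \<notin> M \<longrightarrow> (\<exists>f\<in>M. \<not> disjnt e f))"
    by blast
next
  assume M: "matching G M \<and> (\<forall>e\<in>edges G. e \<notin> M \<longrightarrow> (\<exists>f\<in>M. \<not> disjnt e f))"
  have False if "matching G M'" "M \<subset> M'" for M'
  proof -
    obtain e where e: "e \<in> M'" "e \<notin> M" using \<open>M \<subset> M'\<close> by blast
    with M \<open>matching G M'\<close> obtain f where "f \<in> M" "\<not> disjnt e f"
      by (auto simp: matching_iff)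
    moreover have "f \<in> M'" "e \<noteq> f" using \<open>M \<subset> M'\<close> \<open>f \<in> M\<close> e by auto
    ultimately show False
      using \<open>matching G M'\<close> e(1) by (auto simp: matching_iff pairwise_def)
  qed
  with M show "maximal_matching G M"
    unfolding maximal_matching_def by blast
qed

lemma edges_del_verts: "edges (del_verts G S) = {e \<in> edges G. e \<inter> S = {}}"
  by (simp add: del_verts_def edges_def)

lemma del_verts_del_verts: "del_verts (del_verts G S) T = del_verts G (S \<union> T)"
  by (auto simp: del_verts_def verts_def edges_def)

lemma finite_maximal_matchings:
  "finite (edges G) \<Longrightarrow> finite {M. maximal_matching G M}"
  by (rule finite_subset[of _ "Pow (edges G)"])
     (auto simp: maximal_matching_iff matching_iff)

lemma maximal_matching_del_verts_avoiding:
  assumes "maximal_matching G M" and "\<forall>e\<in>M. e \<inter> S = {}"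
  shows "maximal_matching (del_verts G S) M"
  using assms by (auto simp: maximal_matching_iff matching_iff edges_del_verts)

lemma maximal_matching_del_verts_edge:
  assumes max: "maximal_matching G M" and f: "f \<in> M" "f \<noteq> {}"
  shows "maximal_matching (del_verts G f) (M - {f})"
  unfolding maximal_matching_iff
proof (intro conjI ballI impI)
  have "e \<inter> f = {}" if "e \<in> M - {f}" for e
    using max that f by (auto simp: maximal_matching_iff matching_iff pairwise_def disjnt_def)
  with max show "matching (del_verts G f) (M - {f})"
    by (auto simp: maximal_matching_iff matching_iff edges_del_verts pairwise_def)
next
  fix e assume e: "e \<in> edges (del_verts G f)" "e \<notin> M - {f}"
  then have "e \<inter> f = {}" "e \<in> edges G" by (auto simp: edges_del_verts)
  with f e have "e \<notin> M" by auto
  with max \<open>e \<in> edges G\<close> obtain g where "g \<in> M" "\<not> disjnt e g"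
    by (auto simp: maximal_matching_iff)
  moreover from this have "g \<noteq> f" using \<open>e \<inter> f = {}\<close> by (auto simp: disjnt_def)
  ultimately show "\<exists>g\<in>M - {f}. \<not> disjnt e g" by blast
qed

text \<open>A maximal matching of \<open>G - v\<close> either stays maximal in \<open>G\<close> or becomes so after adding
  one edge at \<open>v\<close>; deleting the edges at \<open>v\<close> recovers it.\<close>
lemma Psi_del_vertex_le:
  assumes fin: "finite (edges G)"
  shows "Psi (del_verts G {v}) \<le> Psi G"
proof -
  let ?restrict = "\<lambda>N. {e \<in> N. v \<notin> e}"
  have "{M. maximal_matching (del_verts G {v}) M}
          \<subseteq> ?restrict ` {M. maximal_matching G M}"
  proof
    fix M assume "M \<in> {M. maximal_matching (del_verts G {v}) M}"
    then have max: "maximal_matching (del_verts G {v}) M" by simp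
    then have avoid: "v \<notin> e" and edge: "e \<in> edges G" if "e \<in> M" for e
      using that by (auto simp: maximal_matching_iff matching_iff edges_del_verts)
    then have M_eq: "?restrict M = M" by auto
    show "M \<in> ?restrict ` {M. maximal_matching G M}"
    proof (cases "maximal_matching G M")
      case True
      with M_eq show ?thesis by (metis (mono_tags) image_eqI mem_Collect_eq)
    next
      case False
      with max edge obtain e where e: "e \<in> edges G" "e \<notin> M" "\<forall>f\<in>M. disjnt e f"
        by (auto simp: maximal_matching_iff matching_iff)
      have "v \<in> e"
      proof (rule ccontr)
        assume "v \<notin> e"
        with e have "e \<in> edges (del_verts G {v})" by (simp add: edges_del_verts)
        with max e show False by (auto simp: maximal_matching_iff)
      qed
      have "maximal_matching G (insert e M)"
        using max e \<open>v \<in> e\<close> avoid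
        by (auto simp: maximal_matching_iff matching_iff edges_del_verts pairwise_insert
                       disjnt_def)
      moreover have "?restrict (insert e M) = M" using M_eq \<open>v \<in> e\<close> by auto
      ultimately show ?thesis by (metis (mono_tags) image_eqI mem_Collect_eq)
    qed
  qed
  then have "Psi (del_verts G {v}) \<le> card (?restrict ` {M. maximal_matching G M})"
    unfolding Psi_def using fin by (intro card_mono finite_imageI finite_maximal_matchings)
  also have "\<dots> \<le> Psi G"
    unfolding Psi_def by (rule card_image_le) (rule finite_maximal_matchings[OF fin])
  finally show ?thesis .
qed

lemma Psi_le_twice_Psi_del_pendant:
  assumes fin: "finite (edges G)"
    and pendant: "\<forall>e\<in>edges G. b \<in> e \<longrightarrow> e = {a, b}"
  shows "Psi G \<le> 2 * Psi (del_verts G {b})"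
proof -
  let ?MM = "\<lambda>H. {M. maximal_matching H M}"
  have fin_del: "finite (edges (del_verts G S))" for S
    using fin by (simp add: edges_del_verts)
  have "?MM G \<subseteq> insert {a, b} ` ?MM (del_verts G {a, b}) \<union> ?MM (del_verts G {b})"
  proof
    fix M assume "M \<in> ?MM G"
    then have max: "maximal_matching G M" by simp
    show "M \<in> insert {a, b} ` ?MM (del_verts G {a, b}) \<union> ?MM (del_verts G {b})"
    proof (cases "{a, b} \<in> M")
      case True
      then have "M = insert {a, b} (M - {{a, b}})" by auto
      moreover have "maximal_matching (del_verts G {a, b}) (M - {{a, b}})"
        using maximal_matching_del_verts_edge[OF max True] by simp
      ultimately show ?thesis by blast
    next
      case False
      with max pendant have "\<forall>e\<in>M. e \<inter> {b} = {}"
        by (auto simp: maximal_matching_iff matching_iff)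
      with max show ?thesis by (simp add: maximal_matching_del_verts_avoiding)
    qed
  qed
  then have "Psi G \<le> card (insert {a, b} ` ?MM (del_verts G {a, b}) \<union> ?MM (del_verts G {b}))"
    unfolding Psi_def using fin_del by (intro card_mono) (auto intro: finite_maximal_matchings)
  also have "\<dots> \<le> Psi (del_verts G {a, b}) + Psi (del_verts G {b})"
    unfolding Psi_def by (rule order_trans[OF card_Un_le add_right_mono[OF card_image_le]])
                         (auto intro: finite_maximal_matchings fin_del)
  also have "Psi (del_verts G {a, b}) \<le> Psi (del_verts G {b})"
    using Psi_del_vertex_le[OF fin_del, of "{b}" a] by (simp add: del_verts_del_verts insert_commute)
  finally show ?thesis by simp
qed

lemma hex_edges_subset_set: "e \<in> hex_edges h \<Longrightarrow> length h = 6 \<Longrightarrow> e \<subseteq> set h"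
  by (auto simp: hex_edges_def)

lemma finite_hex_edges: "finite (hex_edges h)"
proof -
  have "hex_edges h = (\<lambda>t. {h ! t, h ! ((t + 1) mod 6)}) ` {..<6}"
    by (auto simp: hex_edges_def)
  then show ?thesis by simp
qed

lemma finite_edges_chain_hex_cactus: "chain_hex_cactus G hs \<Longrightarrow> finite (edges G)"
  by (simp add: chain_hex_cactus_def finite_hex_edges)

lemma chain_hex_cactus_common_vertex_consecutive:
  assumes "chain_hex_cactus G hs" "p < q" "q < length hs"
    and "x \<in> set (hs ! p)" "x \<in> set (hs ! q)"
  shows "q = Suc p"
proof (rule ccontr)
  assume "q \<noteq> Suc p"
  with assms(1-3) have "card (set (hs ! p) \<inter> set (hs ! q)) = 0"
    by (simp add: chain_hex_cactus_def)
  with assms(4,5) show False by auto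
qed

lemma chain_hex_cactus_common_vertex_unique:
  assumes "chain_hex_cactus G hs" "Suc p < length hs"
    and "x \<in> set (hs ! p) \<inter> set (hs ! Suc p)" "y \<in> set (hs ! p) \<inter> set (hs ! Suc p)"
  shows "x = y"
proof -
  from assms(1,2) have "card (set (hs ! p) \<inter> set (hs ! Suc p)) = 1"
    by (simp add: chain_hex_cactus_def)
  with assms(3,4) show ?thesis by (metis card_1_singletonE singletonD)
qed

lemma chain_hex_cactus_edge_at_sole_vertex:
  assumes cactus: "chain_hex_cactus G hs"
    and sole: "\<forall>q<length hs. x \<in> set (hs ! q) \<longrightarrow> q = p"
    and e: "e \<in> edges G" "x \<in> e"
  shows "e \<in> hex_edges (hs ! p)"
proof -
  from cactus e obtain q where q: "q < length hs" "e \<in> hex_edges (hs ! q)"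
    by (auto simp: chain_hex_cactus_def in_set_conv_nth)
  with cactus have "e \<subseteq> set (hs ! q)"
    by (intro hex_edges_subset_set) (auto simp: chain_hex_cactus_def)
  with sole q e have "q = p" by blast
  with q show ?thesis by simp
qed

lemma chain_hex_cactus_vertex_in_sole_hexagon:
  assumes cactus: "chain_hex_cactus G hs" and p: "Suc p < length hs"
    and c: "c \<in> set (hs ! p) \<inter> set (hs ! Suc p)"
    and x: "x \<in> set (hs ! p)" "x \<noteq> c" "p = 0 \<or> x \<notin> set (hs ! (p - 1))"
  shows "\<forall>q<length hs. x \<in> set (hs ! q) \<longrightarrow> q = p"
proof (intro allI impI)
  fix q assume q: "q < length hs" "x \<in> set (hs ! q)"
  consider "q < p" | "q = p" | "p < q" by linarith
  then show "q = p"
  proof cases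
    case 1
    with cactus q x p have "p = Suc q"
      by (intro chain_hex_cactus_common_vertex_consecutive) auto
    with q x show ?thesis by auto
  next
    case 3
    with cactus q x have "q = Suc p"
      by (intro chain_hex_cactus_common_vertex_consecutive[of G hs p q x]) auto
    with cactus p c q x have "x = c"
      by (intro chain_hex_cactus_common_vertex_unique[of G hs p]) auto
    with x show ?thesis by simp
  qed
qed

text \<open>Once the cut-vertex \<open>c\<close> is deleted, a vertex lying in a single hexagon has at most one
  remaining edge.\<close>
lemma Psi_del_cut_le_twice_Psi_del_sole_vertex:
  assumes cactus: "chain_hex_cactus G hs"
    and sole: "\<forall>q<length hs. x \<in> set (hs ! q) \<longrightarrow> q = p"
    and hex: "\<forall>e\<in>hex_edges (hs ! p). x \<in> e \<longrightarrow> c \<in> e \<or> e = {y, x}"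
  shows "Psi (del_verts (induced G W) {c}) \<le> 2 * Psi (del_verts (induced G W) {x, c})"
proof -
  let ?H = "del_verts (induced G W) {c}"
  have edges_H: "edges ?H \<subseteq> edges G"
    unfolding edges_del_verts by (auto simp: induced_def edges_def)
  have "finite (edges ?H)"
    using finite_edges_chain_hex_cactus[OF cactus] edges_H by (rule finite_subset[rotated])
  moreover have "\<forall>e\<in>edges ?H. x \<in> e \<longrightarrow> e = {y, x}"
    using hex chain_hex_cactus_edge_at_sole_vertex[OF cactus sole] edges_H
    by (auto simp: edges_del_verts)
  ultimately have "Psi ?H \<le> 2 * Psi (del_verts ?H {x})"
    by (intro Psi_le_twice_Psi_del_pendant)
  then show ?thesis by (simp add: del_verts_del_verts insert_commute)
qed

theorem lemma3p11:
  fixes G :: "'a graph" and hs :: "'a list list" and m :: nat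
    and a b c i j k :: 'a
  assumes cactus: "chain_hex_cactus G hs"
    and len: "length hs = m" and m2: "m \<ge> 2"
    and c_cut: "c \<in> set (hs ! (m - 2)) \<inter> set (hs ! (m - 1))"
    and lab_dist: "distinct [a, b, c, i, j, k]"
    and lab: "hex_edges (hs ! (m - 2)) = {{a, b}, {b, c}, {c, i}, {i, j}, {j, k}, {k, a}}"
  shows "(let H = induced G (\<Union>h\<in>set (take (m - 1) hs). set h) in
          2 * Psi (del_verts H {b, c}) \<ge> Psi (del_verts H {c})
        \<or> 2 * Psi (del_verts H {c, i}) \<ge> Psi (del_verts H {c}))"
proof -
  define p where "p = m - 2"
  have Suc_p: "Suc p = m - 1" using m2 by (simp add: p_def)
  have p: "Suc p < length hs" using len m2 by (simp add: Suc_p)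
  have c: "c \<in> set (hs ! p) \<inter> set (hs ! Suc p)" using c_cut unfolding Suc_p by (simp add: p_def)
  have hex_lab: "hex_edges (hs ! p) = {{a, b}, {b, c}, {c, i}, {i, j}, {j, k}, {k, a}}"
    using lab by (simp add: p_def)
  moreover have "length (hs ! p) = 6"
    using cactus p by (auto simp: chain_hex_cactus_def)
  ultimately have b_i: "b \<in> set (hs ! p)" "i \<in> set (hs ! p)"
    using hex_edges_subset_set by blast+
  have b_only: "\<forall>e\<in>hex_edges (hs ! p). b \<in> e \<longrightarrow> c \<in> e \<or> e = {a, b}"
    and i_only: "\<forall>e\<in>hex_edges (hs ! p). i \<in> e \<longrightarrow> c \<in> e \<or> e = {j, i}"
    using hex_lab lab_dist by auto
  note bound = Psi_del_cut_le_twice_Psi_del_sole_vertex[OF cactus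
      chain_hex_cactus_vertex_in_sole_hexagon[OF cactus p c]]
  have "p = 0 \<or> b \<notin> set (hs ! (p - 1)) \<or> i \<notin> set (hs ! (p - 1))"
    using chain_hex_cactus_common_vertex_unique[OF cactus, of "p - 1" b i] b_i p lab_dist
    by (cases p) auto
  then show ?thesis
    using bound[OF b_i(1) _ _ b_only] bound[OF b_i(2) _ _ i_only] lab_dist
    by (auto simp: Let_def insert_commute)
qed

end
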